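(* Let $m\in\mathbb{Z}_{>0}$, $|X|=m$, $S=\{-1/2,1/2\}^X$, $B=\{-1,1\}^X$, and let $\ell(y,u)=(y-u)^2$ for $y\in\{-1,1\}$, $u\in[-1,1]$. Then for every $\varepsilon,\delta\ge0$, $\#\mathsf{CompR}(S,B,\ell,\varepsilon,\delta)=0$. However, for the uniform distribution $\mu_X$ over $X$, for any $\varepsilon\in(0,3/4)$ and $\delta\in(0,1/2)$, $\#\mathsf{CompR}^{\mu_X}(B,S,\ell,\varepsilon,\delta)\ge\big(1-\sqrt{1/4+\varepsilon}\big)m$.
   Context: Comparative regression $\mathsf{CompR}_n(S,B,\ell,\varepsilon,\delta)$ (for $S\subseteq([-1,1]\cup\{*\})^X$, total $B\subseteq[-1,1]^X$): (possibly randomized) learners taking $n$ points of $X\times\{-1,1\}$ and outputting $f:X\to[-1,1]$ such that for every distribution $\mu$ on $X\times\{-1,1\}$ for which some $s\in S$ has $\Pr_{x\sim\mu|_X}[s(x)\ne*]=1$ and $\mathbb{E}_\mu[y|x]=s(x)$, with probability $\ge1-\delta$ over $n$ i.i.d. samples, $\mathbb{E}_\mu[\ell(y,f(x))]\le\inf_{b\in B}\mathbb{E}_\mu[\ell(y,b(x))]+\varepsilon$. The distribution-specific version $\mathsf{CompR}^{\mu_X}_n$ requires the guarantee only for $\mu$ with $\mu|_X=\mu_X$. $\#$ denotes the least such $n$. *)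

theory Defs
  imports "HOL-Probability.Probability" "HOL-Library.Extended_Nat"
begin

text \<open>Partial concepts s : X \<rightarrow> [-1,1] \<union> {*} are 'x \<Rightarrow> real option (None = *).\<close>

definition label_dist :: "('x \<times> real) pmf \<Rightarrow> bool" where
  "label_dist \<mu> \<longleftrightarrow> set_pmf \<mu> \<subseteq> UNIV \<times> {-1, 1}"

definition cond_label_exp :: "('x \<times> real) pmf \<Rightarrow> 'x \<Rightarrow> real" where
  "cond_label_exp \<mu> x = measure_pmf.expectation (cond_pmf \<mu> {p. fst p = x}) snd"

definition realizable_by :: "('x \<Rightarrow> real option) set \<Rightarrow> ('x \<times> real) pmf \<Rightarrow> bool" where
  "realizable_by S \<mu> \<longleftrightarrow>
     (\<exists>s\<in>S. \<forall>x\<in>set_pmf (map_pmf fst \<mu>). s x \<noteq> None \<and> cond_label_exp \<mu> x = the (s x))"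

definition risk :: "(real \<Rightarrow> real \<Rightarrow> real) \<Rightarrow> ('x \<times> real) pmf \<Rightarrow> ('x \<Rightarrow> real) \<Rightarrow> real" where
  "risk l \<mu> f = measure_pmf.expectation \<mu> (\<lambda>(x, y). l y (f x))"

definition learner :: "(('x \<times> real) list \<Rightarrow> ('x \<Rightarrow> real) measure) \<Rightarrow> bool" where
  "learner L \<longleftrightarrow> (\<forall>D. prob_space (L D) \<and> sets (L D) = sets borel \<and>
                        (AE f in L D. \<forall>x. -1 \<le> f x \<and> f x \<le> 1))"

definition success_prob ::
  "nat \<Rightarrow> (('x \<times> real) list \<Rightarrow> ('x \<Rightarrow> real) measure) \<Rightarrow> ('x \<Rightarrow> real) set
     \<Rightarrow> (real \<Rightarrow> real \<Rightarrow> real) \<Rightarrow> real \<Rightarrow> ('x \<times> real) pmf \<Rightarrow> real" where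
  "success_prob n L B l \<epsilon> \<mu> =
     measure_pmf.expectation (replicate_pmf n \<mu>)
       (\<lambda>D. measure (L D) {f. risk l \<mu> f \<le> (INF b\<in>B. risk l \<mu> b) + \<epsilon>})"

text \<open>L is a CompR_n(S,B,l,eps,delta) learner, with the guarantee required for all
  distributions satisfying P (P = \<lambda>_. True for the distribution-free version,
  P = (\<lambda>\<mu>. map_pmf fst \<mu> = \<mu>X) for the distribution-specific version).\<close>
definition is_CompR ::
  "(('x \<times> real) pmf \<Rightarrow> bool) \<Rightarrow> nat \<Rightarrow> ('x \<Rightarrow> real option) set \<Rightarrow> ('x \<Rightarrow> real) set
     \<Rightarrow> (real \<Rightarrow> real \<Rightarrow> real) \<Rightarrow> real \<Rightarrow> real
     \<Rightarrow> (('x \<times> real) list \<Rightarrow> ('x \<Rightarrow> real) measure) \<Rightarrow> bool" where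
  "is_CompR P n S B l \<epsilon> \<delta> L \<longleftrightarrow> learner L \<and>
     (\<forall>\<mu>. label_dist \<mu> \<and> P \<mu> \<and> realizable_by S \<mu> \<longrightarrow> success_prob n L B l \<epsilon> \<mu> \<ge> 1 - \<delta>)"

definition CompR_num ::
  "(('x \<times> real) pmf \<Rightarrow> bool) \<Rightarrow> ('x \<Rightarrow> real option) set \<Rightarrow> ('x \<Rightarrow> real) set
     \<Rightarrow> (real \<Rightarrow> real \<Rightarrow> real) \<Rightarrow> real \<Rightarrow> real \<Rightarrow> enat" where
  "CompR_num P S B l \<epsilon> \<delta> =
     (if \<exists>n L. is_CompR P n S B l \<epsilon> \<delta> L
      then enat (LEAST n. \<exists>L. is_CompR P n S B l \<epsilon> \<delta> L) else \<infinity>)"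

definition sq_loss :: "real \<Rightarrow> real \<Rightarrow> real" where
  "sq_loss y u = (y - u)\<^sup>2"

end

theory Submission
  imports Defs
begin

text \<open>Write \<open>c(x) = E[y | x]\<close>. The square-loss risk of a predictor \<open>f\<close> is
  \<open>\<Sum>\<^sub>x P(x) (1 + f(x)\<^sup>2 - 2 f(x) c(x))\<close>. If \<open>|c| \<le> 1/2\<close>, a sign predictor \<open>b\<close> loses
  \<open>2 - 2 b(x) c(x) \<ge> 1\<close> at every point, which is exactly the loss of the constant \<open>0\<close>; so
  outputting \<open>0\<close> without looking at any sample is a comparative learner against sign predictors.

  For the lower bound, label the uniform distribution deterministically by a sign pattern \<open>b\<close>.
  Then \<open>b/2\<close> has risk \<open>1/4\<close>, so an \<open>\<epsilon>\<close>-optimal \<open>f\<close> has risk at most \<open>1/4 + \<epsilon>\<close>. A sample of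
  \<open>n < (3/4 - \<epsilon>) m\<close> points misses more than \<open>(1/4 + \<epsilon>) m\<close> points. Flipping \<open>b\<close> there does not
  change the sample, but since \<open>(1 - u)\<^sup>2 + (1 + u)\<^sup>2 \<ge> 2\<close> no \<open>f\<close> is \<open>\<epsilon>\<close>-optimal for both patterns.
  Pairing the patterns, the success probabilities average to at most \<open>1/2\<close>, so some pattern defeats
  the learner. Hence \<open>n \<ge> (3/4 - \<epsilon>) m \<ge> (1 - \<surd>(1/4 + \<epsilon>)) m\<close>.\<close>

lemma finite_funs_into: "finite F \<Longrightarrow> finite {f :: 'x::finite \<Rightarrow> 'b. \<forall>x. f x \<in> F}"
  using finite_set_of_finite_funs[of "UNIV :: 'x set" F] by simp

lemma real_sqrt_ge_self: "0 \<le> a \<Longrightarrow> a \<le> 1 \<Longrightarrow> a \<le> sqrt a"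
  by (rule real_le_rsqrt) (simp add: power2_eq_square mult_left_le)

lemma continuous_on_coordinate [continuous_intros]: "continuous_on A (\<lambda>f :: 'x \<Rightarrow> real. f x)"
  by (rule continuous_on_subset[OF continuous_on_product_coordinates]) simp

lemma replicate_pmf_map_pmf: "replicate_pmf n (map_pmf g p) = map_pmf (map g) (replicate_pmf n p)"
  by (induction n) (simp_all add: map_pmf_def bind_assoc_pmf bind_return_pmf)

lemma measure_add_le_1_disjoint:
  assumes "prob_space M" "A \<inter> A' = {}"
  shows "measure M A + measure M A' \<le> 1"
proof -
  interpret prob_space M by fact
  show ?thesis
  proof (cases "A \<in> sets M \<and> A' \<in> sets M")
    case True
    then have "measure M (A \<union> A') = measure M A + measure M A'"
      using assms(2) by (intro finite_measure_Union) auto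
    then show ?thesis
      using prob_le_1[of "A \<union> A'"] by simp
  next
    case False
    then show ?thesis
      using prob_le_1[of A] prob_le_1[of A'] measure_notin_sets[of A M] measure_notin_sets[of A' M]
      by auto
  qed
qed

lemma sum_le_half_card_involution:
  fixes h :: "'a \<Rightarrow> real"
  assumes "\<And>a. a \<in> A \<Longrightarrow> g a \<in> A" "\<And>a. a \<in> A \<Longrightarrow> g (g a) = a"
    and "\<And>a. a \<in> A \<Longrightarrow> h a + h (g a) \<le> 1"
  shows "sum h A \<le> card A / 2"
proof -
  have "(\<Sum>a\<in>A. h (g a)) = sum h A"
    by (rule sum.reindex_bij_witness[of _ g g]) (use assms in auto)
  then have "2 * sum h A = (\<Sum>a\<in>A. h a + h (g a))"
    by (simp add: sum.distrib)
  also have "\<dots> \<le> (\<Sum>a\<in>A. 1)"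
    by (rule sum_mono) (use assms in auto)
  finally show ?thesis
    by simp
qed

lemma exists_expectation_le_half:
  fixes h :: "'a \<Rightarrow> 'b \<Rightarrow> real"
  assumes "finite A" "A \<noteq> {}" "finite (set_pmf p)"
    and "\<And>xs. xs \<in> set_pmf p \<Longrightarrow> (\<Sum>a\<in>A. h a xs) \<le> card A / 2"
  shows "\<exists>a\<in>A. measure_pmf.expectation p (h a) \<le> 1/2"
proof (rule ccontr)
  assume "\<not> ?thesis"
  then have "(\<Sum>a\<in>A. 1/2) < (\<Sum>a\<in>A. measure_pmf.expectation p (h a))"
    by (intro sum_strict_mono assms(1,2)) auto
  also have "\<dots> = measure_pmf.expectation p (\<lambda>xs. \<Sum>a\<in>A. h a xs)"
    by (simp add: integrable_measure_pmf_finite assms(3))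
  also have "\<dots> \<le> measure_pmf.expectation p (\<lambda>_. card A / 2)"
    by (rule integral_mono_AE)
      (use assms(3,4) in \<open>auto simp: integrable_measure_pmf_finite AE_measure_pmf_iff\<close>)
  finally show False
    by simp
qed

lemma expectation_label_dist:
  fixes \<mu> :: "('x::finite \<times> real) pmf"
  assumes "label_dist \<mu>"
  shows "measure_pmf.expectation \<mu> g = (\<Sum>x\<in>UNIV. g (x, 1) * pmf \<mu> (x, 1) + g (x, -1) * pmf \<mu> (x, -1))"
proof -
  have "measure_pmf.expectation \<mu> g = (\<Sum>a\<in>UNIV \<times> {-1, 1}. g a * pmf \<mu> a)"
    by (rule integral_measure_pmf_real) (use assms in \<open>auto simp: label_dist_def\<close>)
  also have "\<dots> = (\<Sum>x\<in>UNIV. \<Sum>y\<in>{-1, 1}. g (x, y) * pmf \<mu> (x, y))"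
    unfolding sum.cartesian_product by (simp add: case_prod_unfold)
  also have "\<dots> = (\<Sum>x\<in>UNIV. g (x, 1) * pmf \<mu> (x, 1) + g (x, -1) * pmf \<mu> (x, -1))"
    by (simp add: add.commute)
  finally show ?thesis .
qed

lemma pmf_map_fst_label_dist:
  fixes \<mu> :: "('x::finite \<times> real) pmf"
  assumes "label_dist \<mu>"
  shows "pmf (map_pmf fst \<mu>) x = pmf \<mu> (x, 1) + pmf \<mu> (x, -1)"
proof -
  have "pmf (map_pmf fst \<mu>) x = measure_pmf.expectation \<mu> (indicator (fst -` {x}))"
    by (simp add: pmf_map)
  also have "\<dots> = pmf \<mu> (x, 1) + pmf \<mu> (x, -1)"
    unfolding expectation_label_dist[OF assms] by (simp add: indicator_def sum.distrib)
  finally show ?thesis .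
qed

text \<open>Multiplied out, so that it also holds off the support of the marginal, where the
  conditional distribution is unspecified.\<close>
lemma cond_label_exp_label_dist:
  fixes \<mu> :: "('x::finite \<times> real) pmf"
  assumes "label_dist \<mu>"
  shows "pmf (map_pmf fst \<mu>) x * cond_label_exp \<mu> x = pmf \<mu> (x, 1) - pmf \<mu> (x, -1)"
proof (cases "x \<in> set_pmf (map_pmf fst \<mu>)")
  case True
  define s where "s = {p :: 'x \<times> real. fst p = x}"
  define P where "P = pmf (map_pmf fst \<mu>) x"
  have ne: "set_pmf \<mu> \<inter> s \<noteq> {}"
    using True by (auto simp: s_def)
  have "P \<noteq> 0"
    by (metis P_def True set_pmf_iff)
  have "measure_pmf.prob \<mu> s = P"
    by (simp add: P_def pmf_map s_def vimage_def)
  then have pmf_s: "pmf (cond_pmf \<mu> s) (x', y) = (if x' = x then pmf \<mu> (x', y) / P else 0)" for x' y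
    using ne by (simp add: pmf_cond s_def)
  have cond_label_dist: "label_dist (cond_pmf \<mu> s)"
    using assms ne by (auto simp: label_dist_def)
  have "cond_label_exp \<mu> x = (pmf \<mu> (x, 1) - pmf \<mu> (x, -1)) / P"
    unfolding cond_label_exp_def s_def[symmetric] expectation_label_dist[OF cond_label_dist] pmf_s
    by (simp add: if_distrib diff_divide_distrib cong: if_cong)
  with \<open>P \<noteq> 0\<close> show ?thesis
    by (simp add: P_def)
next
  case False
  then have "pmf (map_pmf fst \<mu>) x = 0"
    by (metis set_pmf_iff)
  moreover from this have "pmf \<mu> (x, 1) = 0" "pmf \<mu> (x, -1) = 0"
    using pmf_map_fst_label_dist[OF assms, of x] by (simp_all add: add_nonneg_eq_0_iff)
  ultimately show ?thesis
    by simp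
qed

lemma risk_sq_loss_label_dist:
  fixes \<mu> :: "('x::finite \<times> real) pmf"
  assumes "label_dist \<mu>"
  shows "risk sq_loss \<mu> f =
    (\<Sum>x\<in>UNIV. pmf (map_pmf fst \<mu>) x * (1 + (f x)\<^sup>2 - 2 * f x * cond_label_exp \<mu> x))"
proof -
  have "sq_loss 1 (f x) * pmf \<mu> (x, 1) + sq_loss (-1) (f x) * pmf \<mu> (x, -1)
      = pmf (map_pmf fst \<mu>) x * (1 + (f x)\<^sup>2 - 2 * f x * cond_label_exp \<mu> x)" for x
  proof -
    have "pmf (map_pmf fst \<mu>) x * (1 + (f x)\<^sup>2 - 2 * f x * cond_label_exp \<mu> x)
        = pmf (map_pmf fst \<mu>) x * (1 + (f x)\<^sup>2) - 2 * f x * (pmf (map_pmf fst \<mu>) x * cond_label_exp \<mu> x)"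
      by (simp add: algebra_simps)
    also have "\<dots> = (pmf \<mu> (x, 1) + pmf \<mu> (x, -1)) * (1 + (f x)\<^sup>2) - 2 * f x * (pmf \<mu> (x, 1) - pmf \<mu> (x, -1))"
      unfolding cond_label_exp_label_dist[OF assms] by (simp add: pmf_map_fst_label_dist[OF assms])
    also have "\<dots> = sq_loss 1 (f x) * pmf \<mu> (x, 1) + sq_loss (-1) (f x) * pmf \<mu> (x, -1)"
      by (simp add: sq_loss_def power2_eq_square algebra_simps)
    finally show ?thesis ..
  qed
  then show ?thesis
    by (simp add: risk_def expectation_label_dist[OF assms])
qed

lemma risk_sq_loss_le_sets_borel:
  fixes \<mu> :: "('x::finite \<times> real) pmf"
  assumes "label_dist \<mu>"
  shows "{f. risk sq_loss \<mu> f \<le> c} \<in> sets (borel :: ('x \<Rightarrow> real) measure)"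
proof -
  have "closed {f :: 'x \<Rightarrow> real.
      (\<Sum>x\<in>UNIV. pmf (map_pmf fst \<mu>) x * (1 + (f x)\<^sup>2 - 2 * f x * cond_label_exp \<mu> x)) \<le> c}"
    by (intro closed_Collect_le continuous_intros)
  then show ?thesis
    unfolding risk_sq_loss_label_dist[OF assms] by (rule borel_closed)
qed

lemma risk_sq_loss_zero_le:
  fixes \<mu> :: "('x::finite \<times> real) pmf"
  assumes "label_dist \<mu>"
    and "\<forall>x\<in>set_pmf (map_pmf fst \<mu>). \<bar>cond_label_exp \<mu> x\<bar> \<le> 1/2"
    and "\<forall>x. \<bar>b x\<bar> = 1"
  shows "risk sq_loss \<mu> (\<lambda>_. 0) \<le> risk sq_loss \<mu> b"
  unfolding risk_sq_loss_label_dist[OF assms(1)]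
proof (rule sum_mono)
  fix x
  let ?P = "pmf (map_pmf fst \<mu>) x" and ?c = "cond_label_exp \<mu> x"
  show "?P * (1 + 0\<^sup>2 - 2 * 0 * ?c) \<le> ?P * (1 + (b x)\<^sup>2 - 2 * b x * ?c)"
  proof (cases "x \<in> set_pmf (map_pmf fst \<mu>)")
    case True
    have "\<bar>?c\<bar> \<le> 1/2"
      using assms(2) True by blast
    then have "\<bar>b x * ?c\<bar> \<le> 1/2"
      using assms(3) by (simp add: abs_mult)
    moreover have "(b x)\<^sup>2 = 1"
      by (metis assms(3) power2_abs one_power2)
    ultimately show ?thesis
      by (intro mult_left_mono) auto
  next
    case False
    then have "?P = 0"
      by (metis set_pmf_iff)
    then show ?thesis
      by simp
  qed
qed

lemma is_CompR_constant_zero: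
  fixes S :: "('x::finite \<Rightarrow> real option) set" and B :: "('x \<Rightarrow> real) set"
  assumes S: "\<forall>s\<in>S. \<forall>x. s x \<noteq> None \<longrightarrow> \<bar>the (s x)\<bar> \<le> 1/2"
    and B: "\<forall>b\<in>B. \<forall>x. \<bar>b x\<bar> = 1" "B \<noteq> {}"
    and "0 \<le> \<epsilon>" "0 \<le> \<delta>"
  shows "is_CompR (\<lambda>_. True) 0 S B sq_loss \<epsilon> \<delta> (\<lambda>_. return borel (\<lambda>_. 0))"
  unfolding is_CompR_def
proof (intro conjI allI impI)
  show "learner (\<lambda>_ :: ('x \<times> real) list. return borel (\<lambda>_ :: 'x. 0 :: real))"
    by (auto simp: learner_def prob_space_return AE_return)
next
  fix \<mu> :: "('x \<times> real) pmf"
  assume \<mu>: "label_dist \<mu> \<and> True \<and> realizable_by S \<mu>"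
  then obtain s where "s \<in> S"
    and "\<forall>x\<in>set_pmf (map_pmf fst \<mu>). s x \<noteq> None \<and> cond_label_exp \<mu> x = the (s x)"
    unfolding realizable_by_def by blast
  then have "\<forall>x\<in>set_pmf (map_pmf fst \<mu>). \<bar>cond_label_exp \<mu> x\<bar> \<le> 1/2"
    using S by metis
  with \<mu> B have "risk sq_loss \<mu> (\<lambda>_. 0) \<le> (INF b\<in>B. risk sq_loss \<mu> b)"
    by (intro cINF_greatest risk_sq_loss_zero_le) auto
  with \<mu> \<open>0 \<le> \<epsilon>\<close> have "success_prob 0 (\<lambda>_. return borel (\<lambda>_. 0)) B sq_loss \<epsilon> \<mu> = 1"
    by (simp add: success_prob_def measure_return risk_sq_loss_le_sets_borel)
  with \<open>0 \<le> \<delta>\<close> show "1 - \<delta> \<le> success_prob 0 (\<lambda>_. return borel (\<lambda>_. 0)) B sq_loss \<epsilon> \<mu>"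
    by simp
qed

lemma CompR_num_eq_0:
  assumes "is_CompR P 0 S B l \<epsilon> \<delta> L"
  shows "CompR_num P S B l \<epsilon> \<delta> = 0"
  using assms unfolding CompR_num_def by (auto intro!: Least_eq_0 simp: zero_enat_def)

lemma CompR_num_ge:
  assumes "\<And>n L. is_CompR P n S B l \<epsilon> \<delta> L \<Longrightarrow> c \<le> real n"
  shows "ereal c \<le> ereal_of_enat (CompR_num P S B l \<epsilon> \<delta>)"
proof (cases "\<exists>n L. is_CompR P n S B l \<epsilon> \<delta> L")
  case True
  then have "\<exists>L. is_CompR P (LEAST n. \<exists>L. is_CompR P n S B l \<epsilon> \<delta> L) S B l \<epsilon> \<delta> L"
    by (rule LeastI_ex)
  then have "c \<le> real (LEAST n. \<exists>L. is_CompR P n S B l \<epsilon> \<delta> L)"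
    using assms by blast
  moreover have "CompR_num P S B l \<epsilon> \<delta> = enat (LEAST n. \<exists>L. is_CompR P n S B l \<epsilon> \<delta> L)"
    using True unfolding CompR_num_def by simp
  ultimately show ?thesis
    by simp
next
  case False
  then have "CompR_num P S B l \<epsilon> \<delta> = \<infinity>"
    unfolding CompR_num_def by (simp only: if_False)
  then show ?thesis
    by simp
qed

definition labelled_uniform_pmf :: "('x::finite \<Rightarrow> real) \<Rightarrow> ('x \<times> real) pmf" where
  "labelled_uniform_pmf b = map_pmf (\<lambda>x. (x, b x)) (pmf_of_set UNIV)"

lemma map_fst_labelled_uniform_pmf: "map_pmf fst (labelled_uniform_pmf b) = pmf_of_set UNIV"
  by (simp add: labelled_uniform_pmf_def pmf.map_comp o_def)

lemma label_dist_labelled_uniform_pmf: "\<forall>x. b x \<in> {-1, 1} \<Longrightarrow> label_dist (labelled_uniform_pmf b)"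
  by (auto simp: label_dist_def labelled_uniform_pmf_def)

lemma cond_label_exp_labelled_uniform_pmf:
  fixes b :: "'x::finite \<Rightarrow> real"
  shows "cond_label_exp (labelled_uniform_pmf b) x = b x"
proof -
  let ?s = "{p :: 'x \<times> real. fst p = x}"
  have "set_pmf (labelled_uniform_pmf b) \<inter> ?s \<noteq> {}"
    by (force simp: labelled_uniform_pmf_def)
  then have "set_pmf (cond_pmf (labelled_uniform_pmf b) ?s) \<subseteq> {(x, b x)}"
    by (auto simp: set_cond_pmf labelled_uniform_pmf_def)
  then have "cond_pmf (labelled_uniform_pmf b) ?s = return_pmf (x, b x)"
    by (simp add: set_pmf_subset_singleton)
  then show ?thesis
    by (simp add: cond_label_exp_def)
qed

lemma risk_sq_loss_labelled_uniform_pmf: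
  fixes b :: "'x::finite \<Rightarrow> real"
  shows "risk sq_loss (labelled_uniform_pmf b) f = (\<Sum>x\<in>UNIV. (b x - f x)\<^sup>2) / CARD('x)"
  by (simp add: labelled_uniform_pmf_def risk_def sq_loss_def integral_pmf_of_set)

definition eps_optimal ::
  "(real \<Rightarrow> real \<Rightarrow> real) \<Rightarrow> ('x \<Rightarrow> real) set \<Rightarrow> real \<Rightarrow> ('x \<times> real) pmf \<Rightarrow> ('x \<Rightarrow> real) set" where
  "eps_optimal l B \<epsilon> \<mu> = {f. risk l \<mu> f \<le> (INF b\<in>B. risk l \<mu> b) + \<epsilon>}"

lemma success_prob_labelled_uniform_pmf:
  "success_prob n L B l \<epsilon> (labelled_uniform_pmf b) =
     measure_pmf.expectation (replicate_pmf n (pmf_of_set UNIV))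
       (\<lambda>xs. measure (L (map (\<lambda>x. (x, b x)) xs)) (eps_optimal l B \<epsilon> (labelled_uniform_pmf b)))"
  unfolding success_prob_def eps_optimal_def labelled_uniform_pmf_def replicate_pmf_map_pmf by simp

lemma INF_risk_sq_loss_labelled_uniform_pmf_le:
  fixes b :: "'x::finite \<Rightarrow> real"
  assumes "\<forall>x. b x \<in> {-1, 1}"
  shows "(INF s\<in>{s. \<forall>x. s x \<in> {-1/2, 1/2}}. risk sq_loss (labelled_uniform_pmf b) s) \<le> 1/4"
proof -
  have "(\<lambda>x. b x / 2) \<in> {s. \<forall>x. s x \<in> {-1/2, 1/2}}"
    using assms by auto
  then have "(INF s\<in>{s. \<forall>x. s x \<in> {-1/2, 1/2}}. risk sq_loss (labelled_uniform_pmf b) s)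
      \<le> risk sq_loss (labelled_uniform_pmf b) (\<lambda>x. b x / 2)"
    by (intro cINF_lower bdd_below_finite finite_imageI finite_funs_into) auto
  also have "\<dots> = 1/4"
  proof -
    have "(b x - b x / 2)\<^sup>2 = 1/4" for x
      using assms[rule_format, of x] by (auto simp: power2_eq_square)
    then have "(\<Sum>x\<in>UNIV. (b x - b x / 2)\<^sup>2) = (\<Sum>x\<in>(UNIV :: 'x set). 1/4)"
      by presburger
    then show ?thesis
      by (simp add: risk_sq_loss_labelled_uniform_pmf)
  qed
  finally show ?thesis .
qed

lemma card_disagreement_le_risk_sq_loss:
  fixes b b' :: "'x::finite \<Rightarrow> real"
  assumes "\<forall>x. b x \<in> {-1, 1}" "\<forall>x. b' x \<in> {-1, 1}"
  shows "2 * card {x. b x \<noteq> b' x} / CARD('x)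
    \<le> risk sq_loss (labelled_uniform_pmf b) f + risk sq_loss (labelled_uniform_pmf b') f"
proof -
  have "2 * card {x. b x \<noteq> b' x} = (\<Sum>x | b x \<noteq> b' x. 2 :: real)"
    by simp
  also have "\<dots> \<le> (\<Sum>x | b x \<noteq> b' x. (b x - f x)\<^sup>2 + (b' x - f x)\<^sup>2)"
  proof (rule sum_mono)
    fix x
    assume "x \<in> {x. b x \<noteq> b' x}"
    with assms[rule_format, of x] have "b' x = - b x" "(b x)\<^sup>2 = 1"
      by auto
    then show "2 \<le> (b x - f x)\<^sup>2 + (b' x - f x)\<^sup>2"
      by (simp add: power2_eq_square algebra_simps)
  qed
  also have "\<dots> \<le> (\<Sum>x\<in>UNIV. (b x - f x)\<^sup>2 + (b' x - f x)\<^sup>2)"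
    by (intro sum_mono2) auto
  finally have "2 * card {x. b x \<noteq> b' x} \<le> (\<Sum>x\<in>UNIV. (b x - f x)\<^sup>2) + (\<Sum>x\<in>UNIV. (b' x - f x)\<^sup>2)"
    by (simp add: sum.distrib)
  then show ?thesis
    unfolding risk_sq_loss_labelled_uniform_pmf add_divide_distrib[symmetric]
    by (rule divide_right_mono) simp
qed

lemma eps_optimal_labelled_uniform_pmf_disjoint:
  fixes b b' :: "'x::finite \<Rightarrow> real"
  assumes "\<forall>x. b x \<in> {-1, 1}" "\<forall>x. b' x \<in> {-1, 1}"
    and "(1/4 + \<epsilon>) * CARD('x) < card {x. b x \<noteq> b' x}"
  shows "eps_optimal sq_loss {s. \<forall>x. s x \<in> {-1/2, 1/2}} \<epsilon> (labelled_uniform_pmf b)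
    \<inter> eps_optimal sq_loss {s. \<forall>x. s x \<in> {-1/2, 1/2}} \<epsilon> (labelled_uniform_pmf b') = {}"
proof (rule equals0I)
  fix f
  assume "f \<in> eps_optimal sq_loss {s. \<forall>x. s x \<in> {-1/2, 1/2}} \<epsilon> (labelled_uniform_pmf b)
    \<inter> eps_optimal sq_loss {s. \<forall>x. s x \<in> {-1/2, 1/2}} \<epsilon> (labelled_uniform_pmf b')"
  then have "risk sq_loss (labelled_uniform_pmf b) f + risk sq_loss (labelled_uniform_pmf b') f
      \<le> 2 * (1/4 + \<epsilon>)"
    using INF_risk_sq_loss_labelled_uniform_pmf_le[OF assms(1)]
      INF_risk_sq_loss_labelled_uniform_pmf_le[OF assms(2)]
    by (auto simp: eps_optimal_def)
  with card_disagreement_le_risk_sq_loss[OF assms(1,2), of f]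
  have "2 * card {x. b x \<noteq> b' x} / CARD('x) \<le> 2 * (1/4 + \<epsilon>)"
    by linarith
  then have "card {x. b x \<noteq> b' x} \<le> (1/4 + \<epsilon>) * CARD('x)"
    by (simp add: divide_le_eq algebra_simps)
  with assms(3) show False
    by simp
qed

lemma sum_measure_eps_optimal_le_half:
  fixes L :: "('x::finite \<times> real) list \<Rightarrow> ('x \<Rightarrow> real) measure" and xs :: "'x list"
  assumes "\<And>D. prob_space (L D)"
    and "(1/4 + \<epsilon>) * CARD('x) < real CARD('x) - card (set xs)"
  shows "(\<Sum>b\<in>{b. \<forall>x. b x \<in> {-1, 1}}. measure (L (map (\<lambda>x. (x, b x)) xs))
      (eps_optimal sq_loss {s. \<forall>x. s x \<in> {-1/2, 1/2}} \<epsilon> (labelled_uniform_pmf b)))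
    \<le> card {b :: 'x \<Rightarrow> real. \<forall>x. b x \<in> {-1, 1}} / 2"
proof -
  define signs where "signs = {b :: 'x \<Rightarrow> real. \<forall>x. b x \<in> {-1, 1}}"
  define good where "good b = eps_optimal sq_loss {s. \<forall>x. s x \<in> {-1/2, 1/2}} \<epsilon> (labelled_uniform_pmf b)"
    for b :: "'x \<Rightarrow> real"
  define h where "h b = measure (L (map (\<lambda>x. (x, b x)) xs)) (good b)" for b :: "'x \<Rightarrow> real"
  define flip where "flip b = (\<lambda>x. if x \<in> set xs then b x else - b x)" for b :: "'x \<Rightarrow> real"
  have flip_signs: "flip b \<in> signs" if "b \<in> signs" for b
  proof -
    have "b x \<in> {-1, 1}" "- b x \<in> {-1, 1}" for x
      using that by (auto simp: signs_def)
    then show ?thesis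
      by (simp add: signs_def flip_def)
  qed
  have flip_flip: "flip (flip b) = b" for b
    by (simp add: flip_def fun_eq_iff)
  have "h b + h (flip b) \<le> 1" if "b \<in> signs" for b
  proof -
    have "b x \<noteq> - b x" for x
      using that[unfolded signs_def, THEN CollectD, rule_format, of x] by auto
    then have "{x. b x \<noteq> flip b x} = UNIV - set xs"
      by (auto simp: flip_def)
    then have "real (card {x. b x \<noteq> flip b x}) = real CARD('x) - card (set xs)"
      by (simp add: card_Diff_subset of_nat_diff card_mono)
    with assms(2) that flip_signs[OF that] have "good b \<inter> good (flip b) = {}"
      unfolding good_def signs_def by (intro eps_optimal_labelled_uniform_pmf_disjoint) auto
    moreover have same_sample: "map (\<lambda>x. (x, flip b x)) xs = map (\<lambda>x. (x, b x)) xs"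
      by (simp add: flip_def)
    ultimately show ?thesis
      unfolding h_def same_sample by (intro measure_add_le_1_disjoint assms(1))
  qed
  from sum_le_half_card_involution[of signs flip h, OF flip_signs flip_flip this]
  show ?thesis
    by (simp add: signs_def h_def good_def)
qed

lemma sample_size_ge_of_is_CompR_uniform:
  fixes L :: "('x::finite \<times> real) list \<Rightarrow> ('x \<Rightarrow> real) measure"
  assumes CompR: "is_CompR (\<lambda>\<mu>. map_pmf fst \<mu> = pmf_of_set UNIV) n
      {b. \<forall>x. b x \<in> {Some (-1), Some 1}} {s. \<forall>x. s x \<in> {-1/2, 1/2}} sq_loss \<epsilon> \<delta> L"
    and "\<delta> < 1/2"
  shows "(3/4 - \<epsilon>) * CARD('x) \<le> n"
proof (rule ccontr)
  assume "\<not> ?thesis"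
  then have few_samples: "real n < (3/4 - \<epsilon>) * CARD('x)"
    by simp
  define U where "U = replicate_pmf n (pmf_of_set (UNIV :: 'x set))"
  define signs where "signs = {b :: 'x \<Rightarrow> real. \<forall>x. b x \<in> {-1, 1}}"
  define h where "h b xs = measure (L (map (\<lambda>x. (x, b x)) xs))
    (eps_optimal sq_loss {s. \<forall>x. s x \<in> {-1/2, 1/2}} \<epsilon> (labelled_uniform_pmf b))" for b xs
  have "(\<Sum>b\<in>signs. h b xs) \<le> card signs / 2" if "xs \<in> set_pmf U" for xs
  proof -
    have "card (set xs) \<le> n"
      using that card_length by (auto simp: U_def set_replicate_pmf)
    with few_samples have "(1/4 + \<epsilon>) * CARD('x) < real CARD('x) - card (set xs)"
      by (simp add: algebra_simps)
    moreover have "prob_space (L D)" for D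
      using CompR by (simp add: is_CompR_def learner_def)
    ultimately show ?thesis
      unfolding signs_def h_def by (intro sum_measure_eps_optimal_le_half)
  qed
  moreover have "finite signs"
    unfolding signs_def by (rule finite_funs_into) simp
  moreover have "(\<lambda>_. 1) \<in> signs"
    by (simp add: signs_def)
  moreover have "finite (set_pmf U)"
    using finite_lists_length_eq[of "UNIV :: 'x set" n] by (simp add: set_replicate_pmf U_def)
  ultimately obtain b where b: "b \<in> signs" and "measure_pmf.expectation U (h b) \<le> 1/2"
    using exists_expectation_le_half[of signs U h] by blast
  moreover have "realizable_by {b. \<forall>x. b x \<in> {Some (-1), Some 1}} (labelled_uniform_pmf b)"
    unfolding realizable_by_def
    by (rule bexI[of _ "\<lambda>x. Some (b x)"])
      (use b in \<open>auto simp: signs_def cond_label_exp_labelled_uniform_pmf\<close>)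
  with b CompR have "1 - \<delta> \<le> success_prob n L {s. \<forall>x. s x \<in> {-1/2, 1/2}} sq_loss \<epsilon> (labelled_uniform_pmf b)"
    by (auto simp: is_CompR_def signs_def label_dist_labelled_uniform_pmf map_fst_labelled_uniform_pmf)
  ultimately show False
    using \<open>\<delta> < 1/2\<close> by (simp add: success_prob_labelled_uniform_pmf h_def[abs_def] U_def)
qed

theorem lemmaC3:
  fixes m :: nat
  assumes "CARD('x::finite) = m"
  defines "S \<equiv> {s :: 'x \<Rightarrow> real option. \<forall>x. s x \<in> {Some (-1/2), Some (1/2)}}"
      and "B \<equiv> {b :: 'x \<Rightarrow> real. \<forall>x. b x \<in> {-1, 1}}"
      and "S_total \<equiv> {s :: 'x \<Rightarrow> real. \<forall>x. s x \<in> {-1/2, 1/2}}"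
      and "B_partial \<equiv> {b :: 'x \<Rightarrow> real option. \<forall>x. b x \<in> {Some (-1), Some 1}}"
      and "\<mu>X \<equiv> pmf_of_set (UNIV :: 'x set)"
  shows "(\<forall>\<epsilon> \<delta>. \<epsilon> \<ge> 0 \<longrightarrow> \<delta> \<ge> 0 \<longrightarrow> CompR_num (\<lambda>_. True) S B sq_loss \<epsilon> \<delta> = 0)
       \<and> (\<forall>\<epsilon> \<delta>. 0 < \<epsilon> \<longrightarrow> \<epsilon> < 3/4 \<longrightarrow> 0 < \<delta> \<longrightarrow> \<delta> < 1/2 \<longrightarrow>
            ereal ((1 - sqrt (1/4 + \<epsilon>)) * real m)
              \<le> ereal_of_enat (CompR_num (\<lambda>\<mu>. map_pmf fst \<mu> = \<mu>X) B_partial S_total sq_loss \<epsilon> \<delta>))"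
proof (intro conjI allI impI)
  fix \<epsilon> \<delta> :: real
  assume "0 \<le> \<epsilon>" "0 \<le> \<delta>"
  have "\<bar>the (s x)\<bar> \<le> 1/2" if "s \<in> S" for s x
    using that[unfolded S_def, THEN CollectD, rule_format, of x] by auto
  moreover have "\<bar>b x\<bar> = 1" if "b \<in> B" for b x
    using that[unfolded B_def, THEN CollectD, rule_format, of x] by auto
  moreover have "(\<lambda>_. 1) \<in> B"
    by (simp add: B_def)
  ultimately have "is_CompR (\<lambda>_. True) 0 S B sq_loss \<epsilon> \<delta> (\<lambda>_. return borel (\<lambda>_. 0))"
    using \<open>0 \<le> \<epsilon>\<close> \<open>0 \<le> \<delta>\<close> by (intro is_CompR_constant_zero) auto
  then show "CompR_num (\<lambda>_. True) S B sq_loss \<epsilon> \<delta> = 0"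
    by (rule CompR_num_eq_0)
next
  fix \<epsilon> \<delta> :: real
  assume "0 < \<epsilon>" "\<epsilon> < 3/4" "0 < \<delta>" "\<delta> < 1/2"
  then have "(1 - sqrt (1/4 + \<epsilon>)) * m \<le> (3/4 - \<epsilon>) * m"
    using real_sqrt_ge_self[of "1/4 + \<epsilon>"] by (intro mult_right_mono) auto
  show "ereal ((1 - sqrt (1/4 + \<epsilon>)) * real m)
      \<le> ereal_of_enat (CompR_num (\<lambda>\<mu>. map_pmf fst \<mu> = \<mu>X) B_partial S_total sq_loss \<epsilon> \<delta>)"
  proof (rule CompR_num_ge)
    fix n L
    assume "is_CompR (\<lambda>\<mu>. map_pmf fst \<mu> = \<mu>X) n B_partial S_total sq_loss \<epsilon> \<delta> L"
    with \<open>\<delta> < 1/2\<close> have "(3/4 - \<epsilon>) * m \<le> n"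
      using sample_size_ge_of_is_CompR_uniform assms(1)
      unfolding B_partial_def S_total_def \<mu>X_def by blast
    with \<open>(1 - sqrt (1/4 + \<epsilon>)) * m \<le> (3/4 - \<epsilon>) * m\<close> show "(1 - sqrt (1/4 + \<epsilon>)) * m \<le> n"
      by linarith
  qed
qed

end
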